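(* Under Condition ASM (see context), $\|\mathbb{E}_n[x_ir_i]\|_\infty\leqslant\min\{\sigma/\sqrt n,\ c_s\}$.
   Context: Condition ASM: observations $(y_i,z_i)$, $i=1,\dots,n$, $z_i$ fixed, $y_i=f(z_i)+\varepsilon_i$, $\varepsilon_i$ i.i.d. $N(0,\sigma^2)$, $\sigma>0$; $f_i=f(z_i)$, $\mathbb{E}_n[a_i]=n^{-1}\sum_ia_i$; $x_i=P(z_i)\in\mathbb{R}^p$ (including a constant) normalized so that $\mathbb{E}_n[x_{ij}^2]=1$ for each $j$. $\beta_0$ is any solution of $\min_{\beta\in\mathbb{R}^p}\mathbb{E}_n[(f_i-x_i'\beta)^2]+\sigma^2\|\beta\|_0/n$, with $\|\beta\|_0$ the number of nonzero entries; $s=\|\beta_0\|_0$; $r_i=f_i-x_i'\beta_0$; $c_s=\sqrt{\mathbb{E}_n[r_i^2]}$, and $c_s\leqslant K\sigma\sqrt{s/n}$ for an absolute constant $K$. *)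

theory Defs
  imports "HOL-Analysis.Analysis"
begin

definition En :: "nat \<Rightarrow> (nat \<Rightarrow> real) \<Rightarrow> real" where
  "En n a = (\<Sum>i<n. a i) / real n"

definition l0norm :: "real ^ 'p \<Rightarrow> nat" where
  "l0norm \<beta> = card {j. \<beta> $ j \<noteq> 0}"

definition obj :: "nat \<Rightarrow> (nat \<Rightarrow> real) \<Rightarrow> (nat \<Rightarrow> real ^ 'p) \<Rightarrow> real \<Rightarrow> real ^ 'p \<Rightarrow> real" where
  "obj n f x \<sigma> \<beta> = En n (\<lambda>i. (f i - x i \<bullet> \<beta>)\<^sup>2) + \<sigma>\<^sup>2 * real (l0norm \<beta>) / real n"

end

theory Submission
  imports Defs
begin

text \<open>Fix a coordinate j and let a = E_n[x_ij r_i]. Since E_n[x_ij^2] = 1, moving \<beta>0 by a along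
  the j-th axis lowers the empirical squared loss by exactly a^2, so a^2 \<le> E_n[r_i^2]. The move
  adds at most one nonzero entry, i.e. at most \<sigma>^2/n to the penalty; minimality of \<beta>0 then
  forces a^2 \<le> \<sigma>^2/n.\<close>

lemma infnorm_le_cart:
  fixes v :: "real ^ 'p"
  assumes "\<And>j. \<bar>v $ j\<bar> \<le> B"
  shows "infnorm v \<le> B"
  unfolding infnorm_cart by (rule cSup_least) (auto intro: assms)

lemma En_nonneg: "(\<And>i. 0 \<le> a i) \<Longrightarrow> 0 \<le> En n a"
  unfolding En_def by (intro divide_nonneg_nonneg sum_nonneg) auto

lemma En_square_diff_scaled:
  "En n (\<lambda>i. (r i - t * a i)\<^sup>2)
     = En n (\<lambda>i. (r i)\<^sup>2) - 2 * t * En n (\<lambda>i. a i * r i) + t\<^sup>2 * En n (\<lambda>i. (a i)\<^sup>2)"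
proof -
  have "(\<Sum>i<n. (r i - t * a i)\<^sup>2)
          = (\<Sum>i<n. (r i)\<^sup>2) - 2 * t * (\<Sum>i<n. a i * r i) + t\<^sup>2 * (\<Sum>i<n. (a i)\<^sup>2)"
    by (simp add: power2_eq_square algebra_simps sum.distrib sum_subtractf sum_distrib_left)
  then show ?thesis
    unfolding En_def by (simp add: diff_divide_distrib add_divide_distrib)
qed

lemma En_square_residual_of_projection:
  assumes "En n (\<lambda>i. (a i)\<^sup>2) = 1"
  shows "En n (\<lambda>i. (r i - En n (\<lambda>i. a i * r i) * a i)\<^sup>2)
           = En n (\<lambda>i. (r i)\<^sup>2) - (En n (\<lambda>i. a i * r i))\<^sup>2"
  using En_square_diff_scaled[of n r "En n (\<lambda>i. a i * r i)" a] assms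
  by (simp add: power2_eq_square)

lemma projection_coeff_square_le:
  assumes "En n (\<lambda>i. (a i)\<^sup>2) = 1"
  shows "(En n (\<lambda>i. a i * r i))\<^sup>2 \<le> En n (\<lambda>i. (r i)\<^sup>2)"
  using En_nonneg[of "\<lambda>i. (r i - En n (\<lambda>i. a i * r i) * a i)\<^sup>2" n]
    En_square_residual_of_projection[OF assms, of r]
  by simp

lemma l0norm_add_axis_le:
  fixes \<beta> :: "real ^ 'p"
  shows "l0norm (\<beta> + axis j t) \<le> l0norm \<beta> + 1"
proof -
  have "{k. (\<beta> + axis j t) $ k \<noteq> 0} \<subseteq> insert j {k. \<beta> $ k \<noteq> 0}"
    by (auto simp: axis_def)
  then have "card {k. (\<beta> + axis j t) $ k \<noteq> 0} \<le> card (insert j {k. \<beta> $ k \<noteq> 0})"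
    by (intro card_mono) auto
  also have "\<dots> \<le> card {k. \<beta> $ k \<noteq> 0} + 1"
    by (simp add: card_insert_if)
  finally show ?thesis
    unfolding l0norm_def .
qed

lemma obj_minimizer_coordinate_correlation_bound:
  fixes x :: "nat \<Rightarrow> real ^ 'p" and \<beta>0 :: "real ^ 'p"
  assumes n_pos: "n \<ge> 1"
    and normalized: "En n (\<lambda>i. (x i $ j)\<^sup>2) = 1"
    and minimal: "obj n f x \<sigma> \<beta>0 \<le> obj n f x \<sigma> (\<beta>0 + axis j (En n (\<lambda>i. x i $ j * (f i - x i \<bullet> \<beta>0))))"
  shows "(En n (\<lambda>i. x i $ j * (f i - x i \<bullet> \<beta>0)))\<^sup>2 \<le> \<sigma>\<^sup>2 / real n"
proof -
  define r where "r i = f i - x i \<bullet> \<beta>0" for i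
  define a where "a = En n (\<lambda>i. x i $ j * r i)"
  have shifted_residual: "f i - x i \<bullet> (\<beta>0 + axis j a) = r i - a * x i $ j" for i
    by (simp add: r_def inner_add_right inner_axis)
  have "obj n f x \<sigma> \<beta>0 \<le> obj n f x \<sigma> (\<beta>0 + axis j a)"
    using minimal unfolding a_def r_def .
  also have "\<dots> = En n (\<lambda>i. (r i)\<^sup>2) - a\<^sup>2 + \<sigma>\<^sup>2 * real (l0norm (\<beta>0 + axis j a)) / real n"
    using En_square_residual_of_projection[OF normalized, of r]
    unfolding obj_def shifted_residual a_def[symmetric] by simp
  also have "\<dots> \<le> En n (\<lambda>i. (r i)\<^sup>2) - a\<^sup>2 + \<sigma>\<^sup>2 * (real (l0norm \<beta>0) + 1) / real n"
    using l0norm_add_axis_le[of \<beta>0 j a] n_pos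
    by (intro add_left_mono divide_right_mono mult_left_mono) auto
  finally have "a\<^sup>2 \<le> \<sigma>\<^sup>2 / real n"
    unfolding obj_def r_def using n_pos by (simp add: add_divide_distrib distrib_left)
  then show ?thesis
    unfolding a_def r_def .
qed

theorem lemma6:
  fixes n :: nat and f :: "nat \<Rightarrow> real" and x :: "nat \<Rightarrow> real ^ 'p"
    and \<sigma> K :: real and \<beta>0 :: "real ^ 'p"
  assumes n_pos: "n \<ge> 1"
    and sigma_pos: "\<sigma> > 0"
    and const: "\<exists>j. \<forall>i<n. x i $ j = 1"
    and normalized: "\<forall>j. En n (\<lambda>i. (x i $ j)\<^sup>2) = 1"
    and beta0_min: "\<forall>\<beta>. obj n f x \<sigma> \<beta>0 \<le> obj n f x \<sigma> \<beta>"
    and cs_bound: "sqrt (En n (\<lambda>i. (f i - x i \<bullet> \<beta>0)\<^sup>2))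
                     \<le> K * \<sigma> * sqrt (real (l0norm \<beta>0) / real n)"
  shows "infnorm (\<chi> j. En n (\<lambda>i. x i $ j * (f i - x i \<bullet> \<beta>0)))
           \<le> min (\<sigma> / sqrt (real n)) (sqrt (En n (\<lambda>i. (f i - x i \<bullet> \<beta>0)\<^sup>2)))"
proof (rule infnorm_le_cart)
  fix j
  define a where "a = En n (\<lambda>i. x i $ j * (f i - x i \<bullet> \<beta>0))"
  have "a\<^sup>2 \<le> \<sigma>\<^sup>2 / real n"
    using obj_minimizer_coordinate_correlation_bound[OF n_pos] normalized beta0_min
    unfolding a_def by blast
  then have "\<bar>a\<bar> \<le> \<sigma> / sqrt (real n)"
    using real_sqrt_le_mono sigma_pos by (fastforce simp: real_sqrt_divide)
  moreover have "\<bar>a\<bar> \<le> sqrt (En n (\<lambda>i. (f i - x i \<bullet> \<beta>0)\<^sup>2))"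
    using real_sqrt_le_mono[OF projection_coeff_square_le] normalized unfolding a_def by simp
  ultimately show "\<bar>(\<chi> j. En n (\<lambda>i. x i $ j * (f i - x i \<bullet> \<beta>0))) $ j\<bar>
        \<le> min (\<sigma> / sqrt (real n)) (sqrt (En n (\<lambda>i. (f i - x i \<bullet> \<beta>0)\<^sup>2)))"
    unfolding a_def by simp
qed

end
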